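(* Let $u\in\mathbb R$ and let $f_\zeta(y)=\sum_{(x,m)\in\zeta}g_m(y-x)$ be a shot-noise field as below. Assume there is $M\subset\{m\in\mathbf M:\ell^d(g_m^{-1}((0,\infty)))>0\}$ with $\mu(M)>0$. Then there is $\rho>1$ such that for every $\beta\ge1$, $$\mathbf E\big(\ell^d(\{f_{\eta^\rho}>u\}\cap\tilde Q_\beta)\big)>0.$$
   Context: $(\mathbf M,\mathscr M,\mu)$ is a probability space, $\{g_m;m\in\mathbf M\}$ a family of measurable functions $\mathbb R^d\to\mathbb R$ (jointly measurable in $(m,x)$) not containing $g\equiv0$, with $\int_{\mathbf M}\int_{B(0,\tau)^c}|g_m(x)|dx\,\mu(dm)<\infty$ for some $\tau>0$. $\eta$ is a Poisson process on $\mathbb R^d\times\mathbf M$ with intensity $\ell^d\otimes\mu$ ($\ell^d$ Lebesgue measure). For a configuration $\zeta$ with $\sum_{(x,m)\in\zeta}|g_m(y-x)|<\infty$ for all $y$, $f_\zeta(y)=\sum_{(x,m)\in\zeta}g_m(y-x)$. $\tilde Q_a=[-a/2,a/2)^d$ and $\eta^\rho=\eta\cap(\tilde Q_\rho\times\mathbf M)$. *)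

theory Defs
  imports "HOL-Probability.Probability"
begin

definition cubeQ :: "real \<Rightarrow> (real ^ 'd) set" where
  "cubeQ a = {x. \<forall>i. - a / 2 \<le> x $ i \<and> x $ i < a / 2}"

definition pcount :: "'a set \<Rightarrow> 'a set \<Rightarrow> ennreal" where
  "pcount \<zeta> A = emeasure (count_space UNIV) (\<zeta> \<inter> A)"

definition poisson_process :: "'w measure \<Rightarrow> 'a measure \<Rightarrow> ('w \<Rightarrow> 'a set) \<Rightarrow> bool" where
  "poisson_process P Lam \<eta> \<longleftrightarrow>
     prob_space P \<and>
     (\<forall>\<omega>\<in>space P. \<eta> \<omega> \<subseteq> space Lam) \<and>
     (\<forall>A\<in>sets Lam. (\<lambda>\<omega>. pcount (\<eta> \<omega>) A) \<in> borel_measurable P) \<and>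
     (\<forall>A\<in>sets Lam. emeasure Lam A < \<infinity> \<longrightarrow>
        (\<forall>k::nat. measure P {\<omega>\<in>space P. pcount (\<eta> \<omega>) A = of_nat k}
            = exp (- measure Lam A) * measure Lam A ^ k / fact k)) \<and>
     (\<forall>A\<in>sets Lam. emeasure Lam A = \<infinity> \<longrightarrow>
        (AE \<omega> in P. pcount (\<eta> \<omega>) A = \<infinity>)) \<and>
     (\<forall>(I::nat set) A. finite I \<longrightarrow> A ` I \<subseteq> sets Lam \<longrightarrow> disjoint_family_on A I \<longrightarrow>
        prob_space.indep_vars P (\<lambda>_. borel) (\<lambda>i \<omega>. pcount (\<eta> \<omega>) (A i)) I)"

text \<open>Shot-noise field of a configuration (finite configurations; for the
  restricted process this is the a.s. case).\<close>
definition shot_noise :: "('m \<Rightarrow> real ^ 'd \<Rightarrow> real) \<Rightarrow> ((real ^ 'd) \<times> 'm) set \<Rightarrow> real ^ 'd \<Rightarrow> real" where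
  "shot_noise g \<zeta> y = (\<Sum>(x, m)\<in>\<zeta>. g m (y - x))"

end

theory Submission
  imports Defs
begin

text \<open>
  Pick \<open>\<delta> > 0\<close> and a set of marks of positive measure on which \<open>{g\<^sub>m > \<delta>}\<close> has positive
  Lebesgue measure. Lebesgue density on dyadic cubes (countably many, so a single cube serves a
  set \<open>C\<close> of marks of positive measure) gives a cube \<open>a + [0,s)\<^sup>d\<close> in which \<open>{g\<^sub>m > \<delta>}\<close>
  misses at most a fraction \<open>\<theta>\<close> of the volume, for every \<open>m \<in> C\<close>. With positive probability
  the restricted process consists of exactly \<open>k \<ge> u/\<delta>\<close> points, all with marks in \<open>C\<close> and
  locations in the small cube \<open>-a - 1/2 + [0,s/2)\<^sup>d\<close>. Then every \<open>y\<close> in \<open>-1/2 + [s/2,s)\<^sup>d \<subseteq> Q\<^sub>1\<close>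
  sees each point through a translate of the dense cube, so outside a set of volume
  \<open>k\<theta>s\<^sup>d\<close> all \<open>k\<close> shots exceed \<open>\<delta>\<close> and the field exceeds \<open>u\<close>; \<open>\<theta> = 1/(k 2^(d+1))\<close>
  leaves volume \<open>(s/2)\<^sup>d/2\<close>.
\<close>

definition hcube :: "real^'d \<Rightarrow> real \<Rightarrow> (real^'d) set" where
  "hcube a s = {x. \<forall>i. a$i \<le> x$i \<and> x$i < a$i + s}"

lemma hcube_borel [measurable]: "hcube a s \<in> sets borel"
proof -
  have "hcube a s = (\<Inter>i. {x. a$i \<le> x$i} \<inter> {x. x$i < a$i + s})"
    by (auto simp: hcube_def)
  also have "\<dots> \<in> sets borel"
    by (intro sets.finite_INT) (auto intro!: sets.Int borel_closed borel_open
         closed_Collect_le open_Collect_less continuous_intros)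
  finally show ?thesis .
qed

lemma emeasure_hcube:
  fixes a :: "real^'d"
  assumes "0 \<le> s"
  shows "emeasure lborel (hcube a s) = ennreal (s ^ CARD('d))"
proof -
  let ?b = "a + (\<chi> i. s)"
  have le: "\<forall>i\<in>Basis. a \<bullet> i \<le> ?b \<bullet> i"
    using assms by (auto simp: Basis_vec_def inner_axis)
  have "(\<Prod>i\<in>Basis. (?b - a) \<bullet> i) = (\<Prod>i\<in>(Basis::(real^'d) set). s)"
    by (intro prod.cong) (auto simp: Basis_vec_def inner_axis)
  then have vol: "(\<Prod>i\<in>Basis. (?b - a) \<bullet> i) = s ^ CARD('d)"
    by simp
  have "emeasure lborel (box a ?b) \<le> emeasure lborel (hcube a s)"
    by (intro emeasure_mono) (auto simp: hcube_def mem_box_cart less_imp_le)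
  moreover have "emeasure lborel (hcube a s) \<le> emeasure lborel (cbox a ?b)"
    by (intro emeasure_mono) (auto simp: hcube_def mem_box_cart less_imp_le)
  ultimately show ?thesis
    using le vol by (simp add: emeasure_lborel_box_eq emeasure_lborel_cbox_eq antisym)
qed

lemma cubeQ_eq_hcube: "cubeQ r = hcube (\<chi> i. - r / 2) r"
  by (auto simp: cubeQ_def hcube_def)

lemma bounded_hcube: "bounded (hcube a s)"
  by (rule bounded_subset[OF bounded_cbox[of a "a + (\<chi> i. s)"]])
     (auto simp: hcube_def mem_box_cart less_imp_le)

lemma bounded_subset_cubeQ:
  fixes S :: "(real^'d) set"
  assumes "bounded S"
  obtains \<rho> where "1 < \<rho>" "S \<subseteq> cubeQ \<rho>"
proof -
  obtain B where B: "\<forall>x\<in>S. norm x \<le> B"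
    using assms by (auto simp: bounded_iff)
  have "S \<subseteq> cubeQ (2 * \<bar>B\<bar> + 2)"
  proof
    fix x assume "x \<in> S"
    then have "norm x \<le> \<bar>B\<bar>"
      using B by fastforce
    then have "- (2 * \<bar>B\<bar> + 2) / 2 \<le> x$i \<and> x$i < (2 * \<bar>B\<bar> + 2) / 2" for i
      using component_le_norm_cart[of x i] by (simp add: abs_le_iff)
    then show "x \<in> cubeQ (2 * \<bar>B\<bar> + 2)"
      by (simp add: cubeQ_def)
  qed
  then show thesis
    using that[of "2 * \<bar>B\<bar> + 2"] by simp
qed

definition dyadic_cube :: "nat \<Rightarrow> ('d::finite \<Rightarrow> int) \<Rightarrow> (real^'d) set" where
  "dyadic_cube n z = hcube (\<chi> i. of_int (z i) / 2^n) (1 / 2^n)"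

lemma dyadic_cube_borel [measurable]: "dyadic_cube n z \<in> sets borel"
  by (simp add: dyadic_cube_def)

lemma mem_dyadic_cube: "x \<in> dyadic_cube n z \<longleftrightarrow> (\<forall>i. z i = \<lfloor>2^n * x$i\<rfloor>)"
proof -
  have "(of_int (z i) / 2^n \<le> x$i \<and> x$i < of_int (z i) / 2^n + 1 / 2^n)
        \<longleftrightarrow> z i = \<lfloor>2^n * x$i\<rfloor>" for i
    by (simp add: field_simps floor_eq_iff eq_commute[of "z i"])
  then show ?thesis by (simp add: dyadic_cube_def hcube_def)
qed

lemma disjoint_family_dyadic_cube: "disjoint_family_on (dyadic_cube n) Z"
  by (auto simp: disjoint_family_on_def mem_dyadic_cube fun_eq_iff)

lemma dist_dyadic_cube_less:
  fixes x y :: "real^'d"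
  assumes "x \<in> dyadic_cube n z" "y \<in> dyadic_cube n z"
  shows "dist y x < real CARD('d) / 2^n"
proof -
  have "\<bar>2^n * y$i - 2^n * x$i\<bar> < 1" for i
  proof -
    have "z i = \<lfloor>2^n * x$i\<rfloor>" "z i = \<lfloor>2^n * y$i\<rfloor>"
      using assms by (auto simp: mem_dyadic_cube)
    then show ?thesis by linarith
  qed
  then have "2^n * \<bar>(y - x)$i\<bar> < 1" for i
    by (simp add: abs_mult right_diff_distrib[symmetric])
  then have comp: "\<bar>(y - x)$i\<bar> < 1 / 2^n" for i
    by (simp add: field_simps)
  have "dist y x \<le> (\<Sum>i\<in>UNIV. \<bar>(y - x)$i\<bar>)"
    unfolding dist_norm by (rule norm_le_l1_cart)
  also have "\<dots> < (\<Sum>i\<in>(UNIV::'d set). 1 / 2^n)"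
    by (rule sum_strict_mono) (use comp in auto)
  finally show ?thesis by simp
qed

lemma open_dyadic_cube_subset:
  fixes x :: "real^'d"
  assumes "open U" "x \<in> U"
  obtains N where "\<And>n. N \<le> n \<Longrightarrow> dyadic_cube n (\<lambda>i. \<lfloor>2^n * x$i\<rfloor>) \<subseteq> U"
proof -
  obtain r where r: "0 < r" "ball x r \<subseteq> U"
    using assms openE by blast
  obtain N where N: "(1/2::real)^N < r / real CARD('d)"
    using real_arch_pow_inv[of "r / real CARD('d)" "1/2"] r by auto
  have "dyadic_cube n (\<lambda>i. \<lfloor>2^n * x$i\<rfloor>) \<subseteq> U" if "N \<le> n" for n
  proof -
    have "r * 2^N \<le> r * 2^n"
      using r that by (intro mult_left_mono power_increasing) auto
    moreover have "real CARD('d) < r * 2^N"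
      using N by (simp add: field_simps power_divide)
    ultimately have small: "real CARD('d) / 2^n < r"
      by (simp add: field_simps)
    have "x \<in> dyadic_cube n (\<lambda>i. \<lfloor>2^n * x$i\<rfloor>)"
      by (simp add: mem_dyadic_cube)
    then have "dyadic_cube n (\<lambda>i. \<lfloor>2^n * x$i\<rfloor>) \<subseteq> ball x r"
      using dist_dyadic_cube_less small by (force simp: dist_commute)
    with r(2) show ?thesis
      by blast
  qed
  then show thesis
    by (rule that)
qed

lemma emeasure_dyadic_inner_approx:
  fixes U :: "(real^'d) set"
  assumes "open U" "r < emeasure lborel U"
  obtains n where "r < emeasure lborel (\<Union>(dyadic_cube n ` {z. dyadic_cube n z \<subseteq> U}))"
proof -
  define D where "D n = \<Union>(dyadic_cube n ` {z. dyadic_cube n z \<subseteq> U})" for n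
  define W where "W N = (\<Inter>n\<in>{N..}. D n)" for N
  have D_sets: "D n \<in> sets lborel" for n
    unfolding D_def by (intro sets.countable_UN') auto
  have W_sets: "W N \<in> sets lborel" for N
    unfolding W_def using D_sets by (intro sets.countable_INT') auto
  have "U \<subseteq> (\<Union>N. W N)"
  proof
    fix x assume "x \<in> U"
    then obtain N where N: "\<And>n. N \<le> n \<Longrightarrow> dyadic_cube n (\<lambda>i. \<lfloor>2^n * x$i\<rfloor>) \<subseteq> U"
      using assms(1) open_dyadic_cube_subset by blast
    have "x \<in> D n" if "N \<le> n" for n
      unfolding D_def using N[OF that] by (auto simp: mem_dyadic_cube)
    then show "x \<in> (\<Union>N. W N)"
      by (auto simp: W_def)
  qed
  then have "emeasure lborel U \<le> emeasure lborel (\<Union>N. W N)"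
    using W_sets by (intro emeasure_mono) auto
  with assms(2) have "r < emeasure lborel (\<Union>N. W N)"
    by (rule order_less_le_trans)
  also have "\<dots> = (SUP N. emeasure lborel (W N))"
    using W_sets by (intro SUP_emeasure_incseq[symmetric]) (auto simp: incseq_def W_def)
  finally obtain N where "r < emeasure lborel (W N)"
    by (auto simp: less_SUP_iff)
  also have "emeasure lborel (W N) \<le> emeasure lborel (D N)"
    using D_sets by (intro emeasure_mono) (auto simp: W_def)
  finally show thesis
    using that[of N] by (simp add: D_def)
qed

lemma exists_dense_dyadic_cube:
  fixes S :: "(real^'d) set"
  assumes S: "S \<in> sets borel" and pos: "0 < emeasure lborel S" and \<theta>: "0 < \<theta>"
  obtains n z
  where "emeasure lborel (dyadic_cube n z - S) \<le> ennreal \<theta> * emeasure lborel (dyadic_cube n z)"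
proof (rule ccontr)
  assume "\<not> thesis"
  then have sparse: "ennreal \<theta> * emeasure lborel (dyadic_cube n z)
                       \<le> emeasure lborel (dyadic_cube n z - S)" for n z
    using that by (meson linear)
  obtain r where r: "0 < r" "ennreal r < emeasure lborel S"
  proof -
    obtain y where y: "0 < y" "y < emeasure lborel S"
      using dense pos by blast
    then obtain r where "y = ennreal r" "0 \<le> r"
      by (cases y) auto
    with y show thesis
      using that[of r] by auto
  qed
  obtain U where U: "open U" "S \<subseteq> U" "emeasure lborel (U - S) < ennreal \<theta> * ennreal r"
    using outer_regular_lborel[OF S, of "\<theta> * r"] \<theta> r by (auto simp: ennreal_mult)
  have "emeasure lborel S \<le> emeasure lborel U"
    using U by (intro emeasure_mono) auto
  with r(2) have "ennreal r < emeasure lborel U"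
    by (rule order_less_le_trans)
  then obtain n where n: "ennreal r < emeasure lborel (\<Union>(dyadic_cube n ` {z. dyadic_cube n z \<subseteq> U}))"
    using U(1) emeasure_dyadic_inner_approx by blast
  define Z where "Z = {z. dyadic_cube n z \<subseteq> U}"
  have "emeasure lborel (\<Union>(dyadic_cube n ` Z)) = (\<integral>\<^sup>+z. emeasure lborel (dyadic_cube n z) \<partial>count_space Z)"
    by (intro emeasure_UN_countable disjoint_family_dyadic_cube) auto
  then have "ennreal \<theta> * emeasure lborel (\<Union>(dyadic_cube n ` Z))
      = (\<integral>\<^sup>+z. ennreal \<theta> * emeasure lborel (dyadic_cube n z) \<partial>count_space Z)"
    by (simp add: nn_integral_cmult)
  also have "\<dots> \<le> (\<integral>\<^sup>+z. emeasure lborel (dyadic_cube n z - S) \<partial>count_space Z)"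
    by (intro nn_integral_mono sparse)
  also have "\<dots> = emeasure lborel (\<Union>z\<in>Z. dyadic_cube n z - S)"
    using S disjoint_family_dyadic_cube[of n Z]
    by (intro emeasure_UN_countable[symmetric]) (auto simp: disjoint_family_on_def)
  also have "\<dots> \<le> emeasure lborel (U - S)"
    using S U(1) by (intro emeasure_mono) (auto simp: Z_def)
  also have "\<dots> < ennreal \<theta> * ennreal r"
    by (rule U(3))
  also have "\<dots> \<le> ennreal \<theta> * emeasure lborel (\<Union>(dyadic_cube n ` Z))"
    using n by (intro mult_left_mono) (auto simp: Z_def)
  finally show False
    by simp
qed

lemma exists_positive_measure_of_cover:
  assumes "countable I" "\<And>i. i \<in> I \<Longrightarrow> C i \<in> sets M"
    and "A \<in> sets M" "A \<subseteq> (\<Union>i\<in>I. C i)" "0 < emeasure M A"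
  obtains i where "i \<in> I" "0 < emeasure M (C i)"
proof (rule ccontr)
  assume "\<not> thesis"
  with that have "C i \<in> null_sets M" if "i \<in> I" for i
    using assms(2)[OF \<open>i \<in> I\<close>] \<open>i \<in> I\<close> by (metis not_gr_zero null_setsI)
  then have "(\<Union>i\<in>I. C i) \<in> null_sets M"
    using assms(1) by (intro null_sets_UN') auto
  then have "A \<in> null_sets M"
    using assms(3,4) by (blast intro: null_sets_subset)
  with assms(5) show False
    by auto
qed

lemma borel_measurable_section:
  fixes g :: "'m \<Rightarrow> real^'d \<Rightarrow> real"
  assumes "(\<lambda>(m, x). g m x) \<in> borel_measurable (mu \<Otimes>\<^sub>M lborel)" "m \<in> space mu"
  shows "g m \<in> borel_measurable borel"
  using measurable_Pair2[OF assms] by simp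

lemma measurable_emeasure_section:
  fixes g :: "'m \<Rightarrow> real^'d \<Rightarrow> real"
  assumes g[measurable]: "(\<lambda>(m, x). g m x) \<in> borel_measurable (mu \<Otimes>\<^sub>M lborel)"
    and [measurable]: "S \<in> sets borel" "T \<in> sets borel"
  shows "(\<lambda>m. emeasure lborel {x \<in> S. g m x \<in> T}) \<in> borel_measurable mu"
proof -
  have "{p \<in> space (mu \<Otimes>\<^sub>M lborel). snd p \<in> S \<and> (case p of (m, x) \<Rightarrow> g m x) \<in> T}
          \<in> sets (mu \<Otimes>\<^sub>M lborel)"
    by measurable
  from lborel.measurable_emeasure_Pair[OF this] show ?thesis
    by (rule measurable_cong[THEN iffD1, rotated]) (auto simp: space_pair_measure)
qed

lemma Collect_pos_eq_UN_Collect_less: "{x. 0 < f x} = (\<Union>n. {x. 1 / Suc n < (f x :: real)})"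
proof (intro set_eqI iffI)
  fix x assume "x \<in> {x. 0 < f x}"
  then obtain n where "inverse (real (Suc n)) < f x"
    using reals_Archimedean by auto
  then show "x \<in> (\<Union>n. {x. 1 / Suc n < f x})"
    by (auto simp: inverse_eq_divide)
next
  fix x assume "x \<in> (\<Union>n. {x. 1 / Suc n < f x})"
  then obtain n where "1 / real (Suc n) < f x"
    by blast
  moreover have "0 < 1 / real (Suc n)"
    by simp
  ultimately show "x \<in> {x. 0 < f x}"
    unfolding mem_Collect_eq by linarith
qed

lemma exists_uniform_positive_level:
  fixes g :: "'m \<Rightarrow> real^'d \<Rightarrow> real"
  assumes g: "(\<lambda>(m, x). g m x) \<in> borel_measurable (mu \<Otimes>\<^sub>M lborel)"
    and M: "M \<in> sets mu" "0 < emeasure mu M"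
    and pos: "\<forall>m\<in>M. 0 < emeasure lborel {x. 0 < g m x}"
  obtains \<delta> M' where "0 < \<delta>" "M' \<in> sets mu" "0 < emeasure mu M'"
    "\<forall>m\<in>M'. 0 < emeasure lborel {x. \<delta> < g m x}"
proof -
  define C where "C n = {m \<in> space mu. 0 < emeasure lborel {x \<in> UNIV. g m x \<in> {1 / Suc n <..}}}" for n
  have C_sets: "C n \<in> sets mu" for n
  proof -
    have "(\<lambda>m. emeasure lborel {x \<in> UNIV. g m x \<in> {1 / Suc n <..}}) \<in> borel_measurable mu"
      by (rule measurable_emeasure_section[OF g]) auto
    then show ?thesis
      unfolding C_def by measurable
  qed
  have "M \<subseteq> (\<Union>n. C n)"
  proof
    fix m assume m: "m \<in> M"
    then have m_space: "m \<in> space mu"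
      using M(1) sets.sets_into_space by blast
    have "{x. 0 < g m x} = (\<Union>n. {x. 1 / Suc n < g m x})"
      by (rule Collect_pos_eq_UN_Collect_less)
    moreover have "emeasure lborel {x. 0 < g m x} \<noteq> 0"
      using pos m by auto
    moreover have "range (\<lambda>n. {x. 1 / Suc n < g m x}) \<subseteq> sets lborel"
      using borel_measurable_section[OF g m_space] by auto
    ultimately obtain n where "emeasure lborel {x. 1 / Suc n < g m x} \<noteq> 0"
      using emeasure_UN_eq_0[of lborel "\<lambda>n. {x. 1 / Suc n < g m x}"] by auto
    then show "m \<in> (\<Union>n. C n)"
      using m_space by (auto simp: C_def zero_less_iff_neq_zero)
  qed
  then obtain n where "0 < emeasure mu (C n)"
    using exists_positive_measure_of_cover[of UNIV C mu M] C_sets M by auto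
  moreover have "\<forall>m\<in>C n. 0 < emeasure lborel {x. 1 / Suc n < g m x}"
    by (auto simp: C_def)
  ultimately show thesis
    using that[of "1 / Suc n" "C n"] C_sets by simp
qed

lemma exists_uniformly_dense_hcube:
  fixes g :: "'m \<Rightarrow> real^'d \<Rightarrow> real"
  assumes g: "(\<lambda>(m, x). g m x) \<in> borel_measurable (mu \<Otimes>\<^sub>M lborel)"
    and M: "M \<in> sets mu" "0 < emeasure mu M"
    and pos: "\<forall>m\<in>M. 0 < emeasure lborel {x. \<delta> < g m x}" and \<theta>: "0 < \<theta>"
  obtains a s C where "0 < s" "s \<le> 1" "C \<in> sets mu" "0 < emeasure mu C"
    "\<forall>m\<in>C. emeasure lborel (hcube a s - {x. \<delta> < g m x}) \<le> ennreal (\<theta> * s ^ CARD('d))"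
proof -
  define C where "C = (\<lambda>(n, z). {m \<in> space mu.
      emeasure lborel {x \<in> dyadic_cube n z. g m x \<in> {..\<delta>}}
        \<le> ennreal \<theta> * emeasure lborel (dyadic_cube n z)})"
  have C_sets: "C (n, z) \<in> sets mu" for n z
  proof -
    have "(\<lambda>m. emeasure lborel {x \<in> dyadic_cube n z. g m x \<in> {..\<delta>}}) \<in> borel_measurable mu"
      by (rule measurable_emeasure_section[OF g]) auto
    then show ?thesis
      unfolding C_def prod.case by measurable
  qed
  have "M \<subseteq> (\<Union>nz\<in>UNIV. C nz)"
  proof
    fix m assume m: "m \<in> M"
    then have m_space: "m \<in> space mu"
      using M(1) sets.sets_into_space by blast
    then have "{x. \<delta> < g m x} \<in> sets borel"
      using borel_measurable_section[OF g m_space] by measurable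
    then obtain n z where "emeasure lborel (dyadic_cube n z - {x. \<delta> < g m x})
        \<le> ennreal \<theta> * emeasure lborel (dyadic_cube n z)"
      using exists_dense_dyadic_cube pos m \<theta> by blast
    moreover have "dyadic_cube n z - {x. \<delta> < g m x} = {x \<in> dyadic_cube n z. g m x \<in> {..\<delta>}}"
      by auto
    ultimately show "m \<in> (\<Union>nz\<in>UNIV. C nz)"
      using m_space by (auto simp: C_def)
  qed
  then obtain n z where nz: "0 < emeasure mu (C (n, z))"
    using exists_positive_measure_of_cover[of UNIV C mu M] C_sets M by auto
  define s :: real where "s = 1 / 2^n"
  define a :: "real^'d" where "a = (\<chi> i. of_int (z i) / 2^n)"
  have cube: "dyadic_cube n z = hcube a s"
    by (simp add: dyadic_cube_def a_def s_def)
  have "0 < s" "s \<le> 1"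
    by (auto simp: s_def)
  moreover have "emeasure lborel (hcube a s - {x. \<delta> < g m x}) \<le> ennreal (\<theta> * s ^ CARD('d))"
    if "m \<in> C (n, z)" for m
  proof -
    have "dyadic_cube n z - {x. \<delta> < g m x} = {x \<in> dyadic_cube n z. g m x \<in> {..\<delta>}}"
      by auto
    with that show ?thesis
      using \<open>0 < s\<close> \<theta> by (simp add: C_def cube emeasure_hcube ennreal_mult)
  qed
  ultimately show thesis
    using that[of s "C (n, z)" a] C_sets nz by blast
qed

lemma emeasure_lborel_translate:
  fixes A :: "'a::euclidean_space set"
  assumes "A \<in> sets borel"
  shows "emeasure lborel {y. y - x \<in> A} = emeasure lborel A"
proof -
  have "emeasure lborel A = emeasure (distr lborel borel ((+) (- x))) A"
    by (simp add: lborel_distr_plus)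
  also have "\<dots> = emeasure lborel ((+) (- x) -` A \<inter> space lborel)"
    using assms by (intro emeasure_distr) auto
  also have "(+) (- x) -` A \<inter> space lborel = {y. y - x \<in> A}"
    by auto
  finally show ?thesis
    by simp
qed

lemma emeasure_Diff_UN_lower_bound:
  assumes T: "T \<in> sets M" "emeasure M T = ennreal t"
    and F: "finite F" and B: "\<And>i. i \<in> F \<Longrightarrow> B i \<in> sets M"
    and B_small: "\<And>i. i \<in> F \<Longrightarrow> emeasure M (B i) \<le> ennreal b" and "0 \<le> b"
  shows "ennreal (t - real (card F) * b) \<le> emeasure M (T - (\<Union>i\<in>F. B i))"
proof -
  let ?U = "\<Union>i\<in>F. B i"
  have U: "?U \<in> sets M"
    using F B by auto
  have "emeasure M T \<le> emeasure M ((T - ?U) \<union> ?U)"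
    using T U by (intro emeasure_mono) auto
  also have "\<dots> \<le> emeasure M (T - ?U) + emeasure M ?U"
    using T U by (intro emeasure_subadditive) auto
  also have "emeasure M ?U \<le> (\<Sum>i\<in>F. emeasure M (B i))"
    using F B by (intro emeasure_subadditive_finite) auto
  also have "\<dots> \<le> (\<Sum>i\<in>F. ennreal b)"
    using B_small by (intro sum_mono) auto
  also have "\<dots> = ennreal (real (card F) * b)"
    using \<open>0 \<le> b\<close> by (simp add: ennreal_mult ennreal_of_nat_eq_real_of_nat)
  finally have le: "ennreal t \<le> emeasure M (T - ?U) + ennreal (real (card F) * b)"
    using T(2) by (simp add: add_left_mono)
  show ?thesis
  proof (cases "emeasure M (T - ?U)")
    case (real r)
    with le \<open>0 \<le> b\<close> have "ennreal t \<le> ennreal (r + real (card F) * b)"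
      by (simp add: ennreal_plus)
    then have "t \<le> r + real (card F) * b \<or> t \<le> 0"
      by (auto simp add: ennreal_le_iff2)
    moreover have "0 \<le> real (card F) * b"
      using \<open>0 \<le> b\<close> by simp
    ultimately show ?thesis
      using real by (auto intro!: ennreal_leI simp: ennreal_neg)
  qed simp
qed

lemma borel_measurable_shot_noise:
  assumes "\<And>x m. (x, m) \<in> F \<Longrightarrow> g m \<in> borel_measurable borel"
  shows "shot_noise g F \<in> borel_measurable borel"
proof -
  have "(\<lambda>y. g m (y - x)) \<in> borel_measurable borel" if "(x, m) \<in> F" for x m
    using assms[OF that] by (intro measurable_compose[OF _ assms[OF that]]) auto
  then have "(\<lambda>y. \<Sum>(x, m)\<in>F. g m (y - x)) \<in> borel_measurable borel"
    by (intro borel_measurable_sum) auto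
  then show ?thesis
    by (simp add: shot_noise_def[abs_def])
qed

lemma shot_noise_exceeds_on_hcube:
  fixes g :: "'m \<Rightarrow> real^'d \<Rightarrow> real" and F :: "((real^'d) \<times> 'm) set"
  assumes F: "finite F" "F \<noteq> {}"
    and pts: "\<And>x m. (x, m) \<in> F \<Longrightarrow> x \<in> hcube (c - a) w"
    and g: "\<And>x m. (x, m) \<in> F \<Longrightarrow> g m \<in> borel_measurable borel"
    and dense: "\<And>x m. (x, m) \<in> F \<Longrightarrow> emeasure lborel (hcube a s - {y. \<delta> < g m y}) \<le> ennreal b"
    and "0 \<le> w" "w \<le> s" "0 \<le> b" and u: "u \<le> real (card F) * \<delta>"
    and S: "S \<in> sets borel" "hcube (c + (\<chi> i. w)) (s - w) \<subseteq> S"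
  shows "ennreal ((s - w) ^ CARD('d) - real (card F) * b) \<le> emeasure lborel {y \<in> S. u < shot_noise g F y}"
proof -
  define T where "T = hcube (c + (\<chi> i. w)) (s - w)"
  define B where "B = (\<lambda>(x, m). {y. y - x \<in> hcube a s - {z. \<delta> < g m z}})"
  have B: "B xm \<in> sets borel \<and> emeasure lborel (B xm) \<le> ennreal b" if xm_F: "xm \<in> F" for xm
  proof -
    obtain x m where xm: "xm = (x, m)" and "(x, m) \<in> F"
      using xm_F by (cases xm) auto
    then have level_set: "hcube a s - {z. \<delta> < g m z} \<in> sets borel"
      using g by measurable
    then have "B xm = (\<lambda>y. y - x) -` (hcube a s - {z. \<delta> < g m z}) \<inter> space borel"
      by (auto simp: B_def xm)
    also have "\<dots> \<in> sets borel"
      using level_set by (intro measurable_sets[of _ borel borel]) auto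
    moreover have "emeasure lborel (B xm) = emeasure lborel (hcube a s - {z. \<delta> < g m z})"
      unfolding B_def xm prod.case using level_set by (rule emeasure_lborel_translate)
    ultimately show ?thesis
      using dense[OF \<open>(x, m) \<in> F\<close>] by simp
  qed
  have "ennreal ((s - w) ^ CARD('d) - real (card F) * b) \<le> emeasure lborel (T - (\<Union>xm\<in>F. B xm))"
    using B assms by (intro emeasure_Diff_UN_lower_bound) (auto simp: T_def emeasure_hcube)
  also have "\<dots> \<le> emeasure lborel {y \<in> S. u < shot_noise g F y}"
  proof (rule emeasure_mono)
    show "T - (\<Union>xm\<in>F. B xm) \<subseteq> {y \<in> S. u < shot_noise g F y}"
    proof safe
      fix y assume y: "y \<in> T" "y \<notin> (\<Union>xm\<in>F. B xm)"
      have "\<delta> < g m (y - x)" if "(x, m) \<in> F" for x m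
      proof -
        have "c$i - a$i \<le> x$i \<and> x$i < c$i - a$i + w \<and> c$i + w \<le> y$i \<and> y$i < c$i + s" for i
          using pts[OF that] y(1) by (auto simp: T_def hcube_def)
        then have "y - x \<in> hcube a s"
          unfolding hcube_def by (smt (verit) mem_Collect_eq vector_minus_component)
        with y(2) that show ?thesis
          by (auto simp: B_def)
      qed
      then have "(\<Sum>(x, m)\<in>F. \<delta>) < (\<Sum>(x, m)\<in>F. g m (y - x))"
        using F by (intro sum_strict_mono) auto
      with u show "u < shot_noise g F y"
        by (simp add: shot_noise_def)
      from y(1) S(2) show "y \<in> S"
        by (auto simp: T_def)
    qed
    show "{y \<in> S. u < shot_noise g F y} \<in> sets lborel"
      using borel_measurable_shot_noise[OF g] S(1) by simp measurable
  qed
  finally show ?thesis .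
qed

lemma pcount_eq_of_nat_iff: "pcount \<zeta> A = of_nat k \<longleftrightarrow> finite (\<zeta> \<inter> A) \<and> card (\<zeta> \<inter> A) = k"
  by (auto simp: pcount_def emeasure_count_space)

lemma pcount_eq_0_iff: "pcount \<zeta> A = 0 \<longleftrightarrow> \<zeta> \<inter> A = {}"
  by (simp add: pcount_def emeasure_count_space_eq_0)

lemma poisson_process_prob_count_pos:
  assumes "poisson_process P Lam \<eta>" "A \<in> sets Lam" "emeasure Lam A < \<infinity>" "k = 0 \<or> 0 < measure Lam A"
  shows "0 < measure P {\<omega> \<in> space P. pcount (\<eta> \<omega>) A = of_nat k}"
proof -
  have "\<forall>A\<in>sets Lam. emeasure Lam A < \<infinity> \<longrightarrow> (\<forall>k::nat.
          measure P {\<omega>\<in>space P. pcount (\<eta> \<omega>) A = of_nat k}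
            = exp (- measure Lam A) * measure Lam A ^ k / fact k)"
    using assms(1) by (simp add: poisson_process_def)
  then have "measure P {\<omega> \<in> space P. pcount (\<eta> \<omega>) A = of_nat k}
      = exp (- measure Lam A) * measure Lam A ^ k / fact k"
    using assms(2,3) by blast
  with assms(4) show ?thesis
    by auto
qed

lemma poisson_process_prob_counts_disjoint:
  assumes pp: "poisson_process P Lam \<eta>" and "A \<in> sets Lam" "B \<in> sets Lam" "A \<inter> B = {}"
  shows "measure P {\<omega> \<in> space P. pcount (\<eta> \<omega>) A = k \<and> pcount (\<eta> \<omega>) B = l}
       = measure P {\<omega> \<in> space P. pcount (\<eta> \<omega>) A = k} * measure P {\<omega> \<in> space P. pcount (\<eta> \<omega>) B = l}"
proof -
  interpret P: prob_space P
    using pp by (simp add: poisson_process_def)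
  define S where "S i = (if i = (0::nat) then A else B)" for i
  define v where "v i = (if i = (0::nat) then k else l)" for i
  define X where "X i \<omega> = pcount (\<eta> \<omega>) (S i)" for i \<omega>
  have "S ` {0, 1} \<subseteq> sets Lam" "disjoint_family_on S {0, 1}"
    using assms by (auto simp: S_def disjoint_family_on_def)
  moreover have "\<forall>(I::nat set) A. finite I \<longrightarrow> A ` I \<subseteq> sets Lam \<longrightarrow> disjoint_family_on A I \<longrightarrow>
      P.indep_vars (\<lambda>_. borel) (\<lambda>i \<omega>. pcount (\<eta> \<omega>) (A i)) I"
    using pp by (simp add: poisson_process_def)
  ultimately have "P.indep_vars (\<lambda>_. borel) X {0, 1}"
    unfolding X_def by (meson finite.emptyI finite_insert)
  then have "P.indep_sets (\<lambda>i. {X i -` T \<inter> space P | T. T \<in> sets borel}) {0, 1}"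
    by (simp add: P.indep_vars_def2)
  then have "P.prob (\<Inter>i\<in>{0, 1}. X i -` {v i} \<inter> space P) = (\<Prod>i\<in>{0, 1}. P.prob (X i -` {v i} \<inter> space P))"
    by (rule P.indep_setsD) (auto intro!: borel_closed)
  then show ?thesis
    by (simp add: X_def S_def v_def vimage_def Int_def conj_ac)
qed

lemma poisson_process_all_points_in:
  assumes pp: "poisson_process P Lam \<eta>"
    and A: "A \<in> sets Lam" "0 < emeasure Lam A" and B: "B \<in> sets Lam" "emeasure Lam B < \<infinity>"
    and "A \<subseteq> B"
  shows "0 < emeasure P {\<omega> \<in> space P. finite (\<eta> \<omega> \<inter> B) \<and> card (\<eta> \<omega> \<inter> B) = k \<and> \<eta> \<omega> \<inter> B \<subseteq> A}"
proof -
  interpret P: prob_space P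
    using pp by (simp add: poisson_process_def)
  have A_fin: "emeasure Lam A < \<infinity>" and BA_fin: "emeasure Lam (B - A) < \<infinity>"
    using B A(1) \<open>A \<subseteq> B\<close> emeasure_mono[of _ B Lam]
    by (metis Diff_subset order.strict_trans1)+
  have "0 < measure Lam A"
    using A(2) A_fin by (simp add: measure_def enn2real_positive_iff)
  have "{\<omega> \<in> space P. finite (\<eta> \<omega> \<inter> B) \<and> card (\<eta> \<omega> \<inter> B) = k \<and> \<eta> \<omega> \<inter> B \<subseteq> A}
      = {\<omega> \<in> space P. pcount (\<eta> \<omega>) A = of_nat k \<and> pcount (\<eta> \<omega>) (B - A) = 0}"
  proof (rule Collect_cong)
    fix \<omega>
    have "\<eta> \<omega> \<inter> B \<subseteq> A \<longleftrightarrow> \<eta> \<omega> \<inter> (B - A) = {} \<and> \<eta> \<omega> \<inter> B = \<eta> \<omega> \<inter> A"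
      using \<open>A \<subseteq> B\<close> by blast
    then have "(finite (\<eta> \<omega> \<inter> B) \<and> card (\<eta> \<omega> \<inter> B) = k \<and> \<eta> \<omega> \<inter> B \<subseteq> A)
        \<longleftrightarrow> pcount (\<eta> \<omega>) A = of_nat k \<and> pcount (\<eta> \<omega>) (B - A) = 0"
      by (auto simp: pcount_eq_of_nat_iff pcount_eq_0_iff)
    then show "(\<omega> \<in> space P \<and> finite (\<eta> \<omega> \<inter> B) \<and> card (\<eta> \<omega> \<inter> B) = k \<and> \<eta> \<omega> \<inter> B \<subseteq> A)
        \<longleftrightarrow> (\<omega> \<in> space P \<and> pcount (\<eta> \<omega>) A = of_nat k \<and> pcount (\<eta> \<omega>) (B - A) = 0)"
      by blast
  qed
  also have "P.prob \<dots> = P.prob {\<omega> \<in> space P. pcount (\<eta> \<omega>) A = of_nat k}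
      * P.prob {\<omega> \<in> space P. pcount (\<eta> \<omega>) (B - A) = 0}"
    using A B by (intro poisson_process_prob_counts_disjoint[OF pp]) auto
  also have "\<dots> > 0"
    using poisson_process_prob_count_pos[OF pp, of _ 0] poisson_process_prob_count_pos[OF pp, of A k]
      A B A_fin BA_fin \<open>0 < measure Lam A\<close> by auto
  finally show ?thesis
    by (simp add: P.emeasure_eq_measure)
qed

lemma nn_integral_pos_if_bounded_below_on:
  assumes "0 < emeasure M E" "0 < c" "\<And>x. x \<in> E \<Longrightarrow> c \<le> f x"
  shows "0 < (\<integral>\<^sup>+x. f x \<partial>M)"
proof -
  have "E \<in> sets M"
    using assms(1) emeasure_notin_sets by fastforce
  have "0 < c * emeasure M E"
    using assms(1,2) by (simp add: ennreal_zero_less_mult_iff)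
  also have "\<dots> = (\<integral>\<^sup>+x. c * indicator E x \<partial>M)"
    using \<open>E \<in> sets M\<close> by (simp add: nn_integral_cmult_indicator)
  also have "\<dots> \<le> (\<integral>\<^sup>+x. f x \<partial>M)"
    using assms(3) by (intro nn_integral_mono) (auto simp: indicator_def)
  finally show ?thesis .
qed

lemma shot_noise_exceeds_on_cubeQ:
  fixes g :: "'m \<Rightarrow> real^'d \<Rightarrow> real" and F :: "((real^'d) \<times> 'm) set"
  assumes F: "finite F" "F \<noteq> {}" "F \<subseteq> hcube ((\<chi> i. - 1 / 2) - a) (s / 2) \<times> C"
    and g: "\<And>m. m \<in> C \<Longrightarrow> g m \<in> borel_measurable borel"
    and dense: "\<And>m. m \<in> C \<Longrightarrow> emeasure lborel (hcube a s - {y. \<delta> < g m y}) \<le> ennreal b"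
    and s: "0 < s" "s \<le> 1" and "0 \<le> b" "u \<le> real (card F) * \<delta>" and \<beta>: "1 \<le> \<beta>"
  shows "ennreal ((s / 2) ^ CARD('d) - real (card F) * b)
           \<le> emeasure lborel {y \<in> cubeQ \<beta>. u < shot_noise g F y}"
proof -
  have "hcube ((\<chi> i. - 1 / 2) + (\<chi> i. s / 2)) (s - s / 2) \<subseteq> cubeQ \<beta>"
  proof
    fix y assume "y \<in> hcube ((\<chi> i. - 1 / 2) + (\<chi> i. s / 2)) (s - s / 2)"
    then have "s / 2 - 1 / 2 \<le> y$i \<and> y$i < s - 1 / 2" for i
      by (simp add: hcube_def)
    then have "- \<beta> / 2 \<le> y$i \<and> y$i < \<beta> / 2" for i
      using s \<beta> by (smt (verit) field_sum_of_halves)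
    then show "y \<in> cubeQ \<beta>"
      by (simp add: cubeQ_def)
  qed
  then have "ennreal ((s - s / 2) ^ CARD('d) - real (card F) * b)
      \<le> emeasure lborel {y \<in> cubeQ \<beta>. u < shot_noise g F y}"
    using assms by (intro shot_noise_exceeds_on_hcube[where c = "\<chi> i. - 1 / 2" and a = a])
      (auto simp: cubeQ_eq_hcube)
  then show ?thesis
    by simp
qed

lemma poisson_process_all_points_in_product:
  fixes \<eta> :: "'w \<Rightarrow> ((real^'d) \<times> 'm) set"
  assumes mu: "finite_measure mu" and pp: "poisson_process P (lborel \<Otimes>\<^sub>M mu) \<eta>"
    and C: "C \<in> sets mu" "0 < emeasure mu C" and "0 < w" "0 \<le> \<rho>" and sub: "hcube p w \<subseteq> cubeQ \<rho>"
  shows "0 < emeasure P {\<omega> \<in> space P. finite (\<eta> \<omega> \<inter> (cubeQ \<rho> \<times> space mu))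
      \<and> card (\<eta> \<omega> \<inter> (cubeQ \<rho> \<times> space mu)) = k \<and> \<eta> \<omega> \<inter> (cubeQ \<rho> \<times> space mu) \<subseteq> hcube p w \<times> C}"
proof (rule poisson_process_all_points_in[OF pp])
  interpret mu: finite_measure mu
    by (rule mu)
  have "emeasure mu (space mu) < \<infinity>"
    by (simp add: less_top[symmetric])
  show "hcube p w \<times> C \<in> sets (lborel \<Otimes>\<^sub>M mu)" "cubeQ \<rho> \<times> space mu \<in> sets (lborel \<Otimes>\<^sub>M mu)"
    using C by (auto simp: cubeQ_eq_hcube)
  show "0 < emeasure (lborel \<Otimes>\<^sub>M mu) (hcube p w \<times> C)"
    using \<open>0 < w\<close> C
    by (simp add: mu.emeasure_pair_measure_Times emeasure_hcube ennreal_zero_less_mult_iff)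
  show "emeasure (lborel \<Otimes>\<^sub>M mu) (cubeQ \<rho> \<times> space mu) < \<infinity>"
    using \<open>0 \<le> \<rho>\<close> \<open>emeasure mu (space mu) < \<infinity>\<close>
    by (simp add: mu.emeasure_pair_measure_Times cubeQ_eq_hcube emeasure_hcube ennreal_mult_less_top)
  show "hcube p w \<times> C \<subseteq> cubeQ \<rho> \<times> space mu"
    using sub C(1) sets.sets_into_space by auto
qed

theorem lemma4p1:
  fixes mu :: "'m measure" and g :: "'m \<Rightarrow> real ^ 'd \<Rightarrow> real"
    and P :: "'w measure" and \<eta> :: "'w \<Rightarrow> ((real ^ 'd) \<times> 'm) set"
    and u :: real and M :: "'m set"
  assumes mu: "prob_space mu"
    and g_meas: "(\<lambda>(m, x). g m x) \<in> borel_measurable (mu \<Otimes>\<^sub>M lborel)"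
    and g_nonzero: "\<forall>m\<in>space mu. g m \<noteq> (\<lambda>_. 0)"
    and g_int: "\<exists>\<tau>>0. (\<integral>\<^sup>+ m. (\<integral>\<^sup>+ x. ennreal \<bar>g m x\<bar> * indicator (- ball 0 \<tau>) x \<partial>lborel) \<partial>mu) < \<infinity>"
    and eta: "poisson_process P (lborel \<Otimes>\<^sub>M mu) \<eta>"
    and M_sets: "M \<in> sets mu"
    and M_sub: "M \<subseteq> {m \<in> space mu. emeasure lborel {x. g m x > 0} > 0}"
    and M_pos: "emeasure mu M > 0"
  shows "\<exists>\<rho>>1. \<forall>\<beta>\<ge>1.
     (\<integral>\<^sup>+ \<omega>. emeasure lborel
         {y \<in> cubeQ \<beta>. shot_noise g (\<eta> \<omega> \<inter> (cubeQ \<rho> \<times> space mu)) y > u} \<partial>P) > 0"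
proof -
  interpret mu: prob_space mu
    by (rule mu)
  obtain \<delta> M' where "0 < \<delta>" "M' \<in> sets mu" "0 < emeasure mu M'"
    and M': "\<forall>m\<in>M'. 0 < emeasure lborel {x. \<delta> < g m x}"
    using exists_uniform_positive_level[OF g_meas M_sets M_pos] M_sub by blast
  define k :: nat where "k = nat \<lceil>u / \<delta>\<rceil> + 1"
  have "u / \<delta> \<le> real k"
    unfolding k_def by linarith
  then have "u \<le> real k * \<delta>"
    using \<open>0 < \<delta>\<close> by (simp add: field_simps)
  define \<theta> where "\<theta> = 1 / (real k * 2 ^ (CARD('d) + 1))"
  have "0 < \<theta>"
    by (simp add: \<theta>_def k_def)
  obtain a s C where s: "0 < s" "s \<le> 1" and C: "C \<in> sets mu" "0 < emeasure mu C"
    and dense: "\<forall>m\<in>C. emeasure lborel (hcube a s - {x. \<delta> < g m x}) \<le> ennreal (\<theta> * s ^ CARD('d))"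
    by (rule exists_uniformly_dense_hcube[OF g_meas \<open>M' \<in> sets mu\<close> \<open>0 < emeasure mu M'\<close> M' \<open>0 < \<theta>\<close>])
  define p :: "real^'d" where "p = (\<chi> i. - 1 / 2) - a"
  obtain \<rho> where "1 < \<rho>" and \<rho>: "hcube p (s / 2) \<subseteq> cubeQ \<rho>"
    using bounded_subset_cubeQ[OF bounded_hcube] .
  define F where "F \<omega> = \<eta> \<omega> \<inter> (cubeQ \<rho> \<times> space mu)" for \<omega>
  define E where "E = {\<omega> \<in> space P. finite (F \<omega>) \<and> card (F \<omega>) = k \<and> F \<omega> \<subseteq> hcube p (s / 2) \<times> C}"
  have E_pos: "0 < emeasure P E"
    unfolding E_def F_def using s C \<open>1 < \<rho>\<close> \<rho>
    by (intro poisson_process_all_points_in_product[OF mu.finite_measure_axioms eta]) auto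
  have "real k * (\<theta> * s ^ CARD('d)) = (s / 2) ^ CARD('d) / 2"
    by (simp add: \<theta>_def k_def power_divide)
  moreover have "0 < (s / 2) ^ CARD('d)"
    using s by simp
  ultimately have gap: "0 < (s / 2) ^ CARD('d) - real k * (\<theta> * s ^ CARD('d))"
    by linarith
  have lower_bound: "ennreal ((s / 2) ^ CARD('d) - real k * (\<theta> * s ^ CARD('d)))
      \<le> emeasure lborel {y \<in> cubeQ \<beta>. u < shot_noise g (F \<omega>) y}"
    if "\<omega> \<in> E" "1 \<le> \<beta>" for \<omega> \<beta>
  proof -
    have F\<omega>: "finite (F \<omega>)" "card (F \<omega>) = k" "F \<omega> \<subseteq> hcube ((\<chi> i. - 1 / 2) - a) (s / 2) \<times> C"
      using that(1) by (auto simp: E_def p_def)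
    have "F \<omega> \<noteq> {}"
      using F\<omega> by (auto simp: k_def)
    have "g m \<in> borel_measurable borel" if "m \<in> C" for m
      using C(1) sets.sets_into_space that by (blast intro: borel_measurable_section[OF g_meas])
    then have "ennreal ((s / 2) ^ CARD('d) - real (card (F \<omega>)) * (\<theta> * s ^ CARD('d)))
        \<le> emeasure lborel {y \<in> cubeQ \<beta>. u < shot_noise g (F \<omega>) y}"
      by (rule shot_noise_exceeds_on_cubeQ[OF F\<omega>(1) \<open>F \<omega> \<noteq> {}\<close> F\<omega>(3)])
         (use dense s \<open>0 < \<theta>\<close> \<open>u \<le> real k * \<delta>\<close> F\<omega>(2) that(2) in auto)
    then show ?thesis
      using F\<omega>(2) by simp
  qed
  show ?thesis
  proof (intro exI[of _ \<rho>] conjI allI impI)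
    show "1 < \<rho>"
      by fact
  next
    fix \<beta> :: real assume "1 \<le> \<beta>"
    have "0 < ennreal ((s / 2) ^ CARD('d) - real k * (\<theta> * s ^ CARD('d)))"
      using gap by simp
    from nn_integral_pos_if_bounded_below_on[OF E_pos this lower_bound[OF _ \<open>1 \<le> \<beta>\<close>]]
    show "0 < (\<integral>\<^sup>+ \<omega>. emeasure lborel
        {y \<in> cubeQ \<beta>. shot_noise g (\<eta> \<omega> \<inter> (cubeQ \<rho> \<times> space mu)) y > u} \<partial>P)"
      by (simp add: F_def)
  qed
qed

end
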